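(* Let $p>0$, let $n$ be a positive integer and let $0<a_n\leq\dots\leq a_1$ be reals with $\sum_{i=1}^n a_i^p=1$. Then for all $0\leq m\leq n$ and $q\geq p$, $$\left(\sum_{i=m+1}^n a_i^q\right)^{1/q}\leq\frac{(p/q)^{1/q}(1-p/q)^{1/p-1/q}}{m^{1/p-1/q}}.$$ In particular, for every $\varepsilon>0$ there exists $C=C(\varepsilon)$ such that for all $q\geq p+\varepsilon$, $$\left(\sum_{i=m+1}^n a_i^q\right)^{1/q}\leq\frac{C}{m^{1/p-1/q}}.$$ *)

theory Defs
  imports Complex_Main
begin

text \<open>Real power with the usual convention x^0 = 1 (in particular 0^0 = 1);
  Isabelle's powr has 0 powr 0 = 0, which would distort the case q = p.\<close>
definition rpow :: "real \<Rightarrow> real \<Rightarrow> real" where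
  "rpow x y = (if y = 0 then 1 else x powr y)"

end

theory Submission
  imports Defs "HOL-Analysis.Convex"
begin

text \<open>Let \<open>A\<close> be the \<open>p\<close>-mass of the head \<open>a 1, \<dots>, a m\<close>, so the tail carries \<open>1 - A\<close>.
  Monotonicity gives \<open>m * a (m+1) powr p \<le> A\<close>, and every tail term satisfies
  \<open>a i powr q \<le> a i powr p * a (m+1) powr (q - p)\<close>; hence the \<open>q\<close>-tail is at most
  \<open>(A/m) powr (q/p - 1) * (1 - A)\<close>. Maximising \<open>A powr (q/p - 1) * (1 - A)\<close> over \<open>[0,1]\<close>
  (weighted AM-GM, the maximum being at \<open>A = 1 - p/q\<close>) yields the constant, which is at most
  \<open>1\<close> and hence also serves as \<open>C(\<epsilon>)\<close>.\<close>

lemma powr_mult_one_minus_le: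
  fixes A s :: real
  assumes "0 \<le> A" "A \<le> 1" "0 < s" "s < 1"
  shows "A powr ((1 - s) / s) * (1 - A) \<le> (1 - s) powr ((1 - s) / s) * s"
proof (cases "A = 0 \<or> A = 1")
  case True
  then show ?thesis using assms by auto
next
  case False
  with assms have A: "0 < A" "A < 1" by auto
  have "(A / (1 - s)) powr (1 - s) * ((1 - A) / s) powr s \<le> (1 - s) * (A / (1 - s)) + s * ((1 - A) / s)"
    using assms A by (intro Youngs_inequality_0) auto
  also have "\<dots> = 1" using assms by (simp add: field_simps)
  finally have "((A / (1 - s)) powr (1 - s) * ((1 - A) / s) powr s) powr (1 / s) \<le> 1"
    using assms A by (intro powr_le1) auto
  then have "A powr ((1 - s) / s) / (1 - s) powr ((1 - s) / s) * ((1 - A) / s) \<le> 1"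
    using assms A by (simp add: powr_mult powr_powr powr_divide)
  then show ?thesis using assms A by (simp add: field_simps)
qed

lemma sum_powr_le_powr_mult_sum:
  fixes a :: "'i \<Rightarrow> real"
  assumes "0 \<le> p" "p \<le> q" and bound: "\<And>i. i \<in> I \<Longrightarrow> 0 < a i \<and> a i \<le> b"
  shows "(\<Sum>i\<in>I. a i powr q) \<le> b powr (q - p) * (\<Sum>i\<in>I. a i powr p)"
  unfolding sum_distrib_left
proof (rule sum_mono)
  fix i assume "i \<in> I"
  with bound have "0 < a i" "a i \<le> b" by auto
  then have "a i powr p * a i powr (q - p) \<le> a i powr p * b powr (q - p)"
    using assms by (intro mult_left_mono powr_mono2) auto
  then show "a i powr q \<le> b powr (q - p) * a i powr p"
    by (simp add: powr_add [symmetric] mult.commute)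
qed

lemma tail_sum_powr_le:
  fixes p q :: real and a :: "nat \<Rightarrow> real" and n m :: nat
  assumes p: "0 < p" and q: "p < q" and m: "1 \<le> m" "m \<le> n"
    and pos: "\<And>i. 1 \<le> i \<Longrightarrow> i \<le> n \<Longrightarrow> 0 < a i"
    and mono: "\<And>i j. 1 \<le> i \<Longrightarrow> i \<le> j \<Longrightarrow> j \<le> n \<Longrightarrow> a j \<le> a i"
    and sum1: "(\<Sum>i=1..n. a i powr p) = 1"
  shows "(\<Sum>i=m+1..n. a i powr q) \<le> (1 - p/q) powr (q/p - 1) * (p/q) / real m powr (q/p - 1)"
proof (cases "m = n")
  case True
  then show ?thesis using p q by simp
next
  case False
  define s e where "s = p / q" and "e = q / p - 1"
  have s: "0 < s" "s < 1" and e: "e = (1 - s) / s" "0 < e"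
    using p q by (auto simp: s_def e_def field_simps)
  define A B where "A = (\<Sum>i=1..m. a i powr p)" and "B = (\<Sum>i=m+1..n. a i powr p)"
  have "{1..n} = {1..m} \<union> {m+1..n}" using m by auto
  then have B: "B = 1 - A"
    using sum1 by (simp add: A_def B_def sum.union_disjoint ivl_disj_int)
  have "0 \<le> B" by (simp add: B_def sum_nonneg)
  with B have A: "0 \<le> A" "A \<le> 1" by (auto simp: A_def intro: sum_nonneg)
  have am: "0 < a (m+1)" using pos False m by auto
  have "real m * a (m+1) powr p \<le> A"
  proof -
    have "(\<Sum>i=1..m. a (m+1) powr p) \<le> A"
      unfolding A_def using am p False m by (intro sum_mono powr_mono2 mono) auto
    then show ?thesis by simp
  qed
  then have head: "a (m+1) powr p \<le> A / m" using m by (simp add: field_simps)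
  have "(\<Sum>i=m+1..n. a i powr q) \<le> a (m+1) powr (q - p) * B"
    unfolding B_def using p q pos mono by (intro sum_powr_le_powr_mult_sum) auto
  also have "a (m+1) powr (q - p) = (a (m+1) powr p) powr e"
    using p by (simp add: powr_powr e_def right_diff_distrib)
  also have "(a (m+1) powr p) powr e * B \<le> (A / m) powr e * B"
    using head e B A by (intro mult_right_mono powr_mono2) auto
  also have "\<dots> = A powr e * (1 - A) / m powr e"
    using A B by (simp add: powr_divide)
  also have "\<dots> \<le> (1 - s) powr e * s / m powr e"
    unfolding e(1) using powr_mult_one_minus_le A s by (intro divide_right_mono) auto
  finally show ?thesis by (simp add: s_def e_def)
qed

lemma tail_norm_le:
  fixes p q :: real and a :: "nat \<Rightarrow> real" and n m :: nat
  assumes p: "0 < p" and q: "p \<le> q" and mq: "1 \<le> m \<or> q = p" and mn: "m \<le> n"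
    and pos: "\<And>i. 1 \<le> i \<Longrightarrow> i \<le> n \<Longrightarrow> 0 < a i"
    and mono: "\<And>i j. 1 \<le> i \<Longrightarrow> i \<le> j \<Longrightarrow> j \<le> n \<Longrightarrow> a j \<le> a i"
    and sum1: "(\<Sum>i=1..n. a i powr p) = 1"
  shows "(\<Sum>i=m+1..n. a i powr q) powr (1/q)
         \<le> (p/q) powr (1/q) * rpow (1 - p/q) (1/p - 1/q) / rpow (real m) (1/p - 1/q)"
proof (cases "q = p")
  case True
  have "(\<Sum>i=m+1..n. a i powr p) \<le> 1"
    unfolding sum1 [symmetric] by (rule sum_mono2) auto
  moreover have "0 \<le> (\<Sum>i=m+1..n. a i powr p)" by (simp add: sum_nonneg)
  ultimately have "(\<Sum>i=m+1..n. a i powr p) powr (1/p) \<le> 1"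
    using p by (intro powr_le1) auto
  then show ?thesis using True p by (simp add: rpow_def)
next
  case False
  with q mq have q': "p < q" "1 \<le> m" by auto
  define d where "d = 1/p - 1/q"
  have d: "0 < d" "(q/p - 1) / q = d" using p q' by (auto simp: d_def field_simps)
  have "(\<Sum>i=m+1..n. a i powr q) powr (1/q)
        \<le> ((1 - p/q) powr (q/p - 1) * (p/q) / real m powr (q/p - 1)) powr (1/q)"
    using p q' tail_sum_powr_le [OF p q'(1) q'(2) mn pos mono sum1]
    by (intro powr_mono2) (auto intro: sum_nonneg)
  also have "\<dots> = (p/q) powr (1/q) * (1 - p/q) powr d / real m powr d"
    using p q' by (simp add: powr_mult powr_divide powr_powr d(2))
  also have "\<dots> = (p/q) powr (1/q) * rpow (1 - p/q) d / rpow (real m) d"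
    using d(1) by (simp add: rpow_def)
  finally show ?thesis by (simp only: d_def)
qed

lemma tail_norm_le_inverse_powr:
  fixes p q :: real and a :: "nat \<Rightarrow> real" and n m :: nat
  assumes p: "0 < p" and q: "p < q" and m: "1 \<le> m" "m \<le> n"
    and pos: "\<And>i. 1 \<le> i \<Longrightarrow> i \<le> n \<Longrightarrow> 0 < a i"
    and mono: "\<And>i j. 1 \<le> i \<Longrightarrow> i \<le> j \<Longrightarrow> j \<le> n \<Longrightarrow> a j \<le> a i"
    and sum1: "(\<Sum>i=1..n. a i powr p) = 1"
  shows "(\<Sum>i=m+1..n. a i powr q) powr (1/q) \<le> 1 / real m powr (1/p - 1/q)"
proof -
  define d where "d = 1/p - 1/q"
  have d: "0 < d" using p q by (simp add: d_def field_simps)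
  have "(p/q) powr (1/q) * (1 - p/q) powr d \<le> 1"
    using p q d by (intro mult_le_one powr_le1) auto
  then have "(p/q) powr (1/q) * (1 - p/q) powr d / real m powr d \<le> 1 / real m powr d"
    using m by (intro divide_right_mono) auto
  moreover have "(\<Sum>i=m+1..n. a i powr q) powr (1/q) \<le> (p/q) powr (1/q) * (1 - p/q) powr d / real m powr d"
    using tail_norm_le [OF p _ _ m(2) pos mono sum1, of q] q m d by (simp add: rpow_def d_def)
  ultimately show ?thesis by (simp add: d_def)
qed

theorem lemma7p4:
  fixes p :: real
  assumes p_pos: "p > 0"
  shows
   "(\<forall>(n::nat) (a::nat \<Rightarrow> real) (m::nat) (q::real).
       n \<ge> 1 \<longrightarrow>
       (\<forall>i. 1 \<le> i \<and> i \<le> n \<longrightarrow> a i > 0) \<longrightarrow>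
       (\<forall>i j. 1 \<le> i \<and> i \<le> j \<and> j \<le> n \<longrightarrow> a j \<le> a i) \<longrightarrow>
       (\<Sum>i=1..n. a i powr p) = 1 \<longrightarrow>
       m \<le> n \<longrightarrow> q \<ge> p \<longrightarrow> (m \<ge> 1 \<or> q = p) \<longrightarrow>
       (\<Sum>i=m+1..n. a i powr q) powr (1/q)
         \<le> (p/q) powr (1/q) * rpow (1 - p/q) (1/p - 1/q) / rpow (real m) (1/p - 1/q))
    \<and>
    (\<forall>\<epsilon>>0. \<exists>C::real. \<forall>(n::nat) (a::nat \<Rightarrow> real) (m::nat) (q::real).
       n \<ge> 1 \<longrightarrow>
       (\<forall>i. 1 \<le> i \<and> i \<le> n \<longrightarrow> a i > 0) \<longrightarrow>
       (\<forall>i j. 1 \<le> i \<and> i \<le> j \<and> j \<le> n \<longrightarrow> a j \<le> a i) \<longrightarrow>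
       (\<Sum>i=1..n. a i powr p) = 1 \<longrightarrow>
       1 \<le> m \<longrightarrow> m \<le> n \<longrightarrow> q \<ge> p + \<epsilon> \<longrightarrow>
       (\<Sum>i=m+1..n. a i powr q) powr (1/q) \<le> C / (real m) powr (1/p - 1/q))"
proof (intro conjI allI impI exI [of _ 1])
  fix n m :: nat and a :: "nat \<Rightarrow> real" and q :: real
  assume "\<forall>i. 1 \<le> i \<and> i \<le> n \<longrightarrow> a i > 0" "\<forall>i j. 1 \<le> i \<and> i \<le> j \<and> j \<le> n \<longrightarrow> a j \<le> a i"
    "(\<Sum>i=1..n. a i powr p) = 1" "m \<le> n" "q \<ge> p" "m \<ge> 1 \<or> q = p"
  then show "(\<Sum>i=m+1..n. a i powr q) powr (1/q)
      \<le> (p/q) powr (1/q) * rpow (1 - p/q) (1/p - 1/q) / rpow (real m) (1/p - 1/q)"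
    using tail_norm_le [OF p_pos] by blast
next
  fix \<epsilon> :: real and n m :: nat and a :: "nat \<Rightarrow> real" and q :: real
  assume "\<epsilon> > 0" "\<forall>i. 1 \<le> i \<and> i \<le> n \<longrightarrow> a i > 0"
    "\<forall>i j. 1 \<le> i \<and> i \<le> j \<and> j \<le> n \<longrightarrow> a j \<le> a i"
    "(\<Sum>i=1..n. a i powr p) = 1" "1 \<le> m" "m \<le> n" "q \<ge> p + \<epsilon>"
  then show "(\<Sum>i=m+1..n. a i powr q) powr (1/q) \<le> 1 / real m powr (1/p - 1/q)"
    using tail_norm_le_inverse_powr [OF p_pos, of q m n a] by auto
qed

end
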